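(* Let $L$ be a finite $\vee$-semilattice with a least element $0$, and let $v:L\to\mathbb{R}$ be a strictly isotone upper valuation or a strictly isotone lower valuation. Let $d_v(x,y)=v(x)+v(y)-2v^-(x,y)$ if $v$ is a lower valuation and $d_v(x,y)=2v^+(x,y)-v(x)-v(y)$ if $v$ is an upper valuation. If $d_v(x,y)=v^+(x,y)-v^-(x,y)$ for all $x,y\in L$, then $L$ is a modular lattice.
   Context: For a poset $(P,\le)$ and $x\in P$: $\downarrow x=\{x'\in P: x'\le x\}$, $\uparrow x=\{x'\in P: x\le x'\}$. A function $f:P\to\mathbb{R}$ is isotone if $x\le y\Rightarrow f(x)\le f(y)$, strictly isotone if $x<y\Rightarrow f(x)<f(y)$. For an isotone $f$ and $x,y\in P$ define $f^-(x,y)=\sup\{f(z):z\in\downarrow x\cap\downarrow y\}$ and $f^+(x,y)=\inf\{f(z):z\in\uparrow x\cap\uparrow y\}$, with $\inf\emptyset=+\infty$, $\sup\emptyset=-\infty$. An isotone $v$ is a lower valuation if $\downarrow x\cap\downarrow y\neq\emptyset$ for all $x,y$ and $v(x)+v(y)\le v^-(x,y)+v^+(x,y)$ for all $x,y$; it is an upper valuation if $\uparrow x\cap\uparrow y\neq\emptyset$ for all $x,y$ and $v^-(x,y)+v^+(x,y)\le v(x)+v(y)$ for all $x,y$. *)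

theory Defs
  imports Main "HOL-Library.Extended_Real"
begin

definition down_set :: "'a::order \<Rightarrow> 'a set" where
  "down_set x = {x'. x' \<le> x}"

definition up_set :: "'a::order \<Rightarrow> 'a set" where
  "up_set x = {x'. x \<le> x'}"

definition isotone :: "('a::order \<Rightarrow> real) \<Rightarrow> bool" where
  "isotone f \<longleftrightarrow> (\<forall>x y. x \<le> y \<longrightarrow> f x \<le> f y)"

definition strictly_isotone :: "('a::order \<Rightarrow> real) \<Rightarrow> bool" where
  "strictly_isotone f \<longleftrightarrow> (\<forall>x y. x < y \<longrightarrow> f x < f y)"

text \<open>f^-(x,y) and f^+(x,y), valued in the extended reals (sup of empty = -inf, inf of empty = +inf).\<close>
definition fminus :: "('a::order \<Rightarrow> real) \<Rightarrow> 'a \<Rightarrow> 'a \<Rightarrow> ereal" where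
  "fminus f x y = (SUP z \<in> down_set x \<inter> down_set y. ereal (f z))"

definition fplus :: "('a::order \<Rightarrow> real) \<Rightarrow> 'a \<Rightarrow> 'a \<Rightarrow> ereal" where
  "fplus f x y = (INF z \<in> up_set x \<inter> up_set y. ereal (f z))"

definition lower_valuation :: "('a::order \<Rightarrow> real) \<Rightarrow> bool" where
  "lower_valuation v \<longleftrightarrow> isotone v \<and>
     (\<forall>x y::'a. down_set x \<inter> down_set y \<noteq> {}) \<and>
     (\<forall>x y. ereal (v x) + ereal (v y) \<le> fminus v x y + fplus v x y)"

definition upper_valuation :: "('a::order \<Rightarrow> real) \<Rightarrow> bool" where
  "upper_valuation v \<longleftrightarrow> isotone v \<and>
     (\<forall>x y::'a. up_set x \<inter> up_set y \<noteq> {}) \<and>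
     (\<forall>x y. fminus v x y + fplus v x y \<le> ereal (v x) + ereal (v y))"

definition d_lower :: "('a::order \<Rightarrow> real) \<Rightarrow> 'a \<Rightarrow> 'a \<Rightarrow> ereal" where
  "d_lower v x y = ereal (v x) + ereal (v y) - 2 * fminus v x y"

definition d_upper :: "('a::order \<Rightarrow> real) \<Rightarrow> 'a \<Rightarrow> 'a \<Rightarrow> ereal" where
  "d_upper v x y = 2 * fplus v x y - ereal (v x) - ereal (v y)"

definition is_glb :: "'a::order \<Rightarrow> 'a \<Rightarrow> 'a \<Rightarrow> bool" where
  "is_glb x y m \<longleftrightarrow> m \<le> x \<and> m \<le> y \<and> (\<forall>z. z \<le> x \<and> z \<le> y \<longrightarrow> z \<le> m)"

definition glb :: "'a::order \<Rightarrow> 'a \<Rightarrow> 'a" where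
  "glb x y = (THE m. is_glb x y m)"

definition modular_lattice :: "'a::semilattice_sup itself \<Rightarrow> bool" where
  "modular_lattice (_::'a itself) \<longleftrightarrow> (\<forall>x y::'a. \<exists>m. is_glb x y m) \<and>
     (\<forall>x y z::'a. x \<le> z \<longrightarrow> sup x (glb y z) = glb (sup x y) z)"

end

theory Submission
  imports Defs
begin

(* In a finite join-semilattice with least element every pair x, y
   has a greatest lower bound glb x y (the join of the finitely many, and at
   least one, common lower bounds).  Hence for an isotone v the quantities
   v^-(x,y) and v^+(x,y) are attained: v^- = v (glb x y) and v^+ = v (sup x y).
   In either case (lower or upper valuation) the hypothesis d_v = v^+ - v^-
   then reduces to the valuation identity
       v x + v y = v (sup x y) + v (glb x y).
   The classical argument of Birkhoff finishes the proof: for x <= z the two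
   sides a = x \<squnion> (y \<sqinter> z) and b = (x \<squnion> y) \<sqinter> z of the modular law satisfy
   a <= b in every lattice, and the valuation identity gives v a = v b, so a = b
   by strict isotonicity. *)

lemma glb_eqI:
  fixes x y m :: "'a::order"
  assumes "is_glb x y m"
  shows "glb x y = m"
proof -
  have unique: "m' = m" if "is_glb x y m'" for m'
    using that assms unfolding is_glb_def by (meson order_antisym)
  show ?thesis unfolding glb_def using assms unique by (rule the_equality)
qed

lemma is_glb_glb:
  fixes x y :: "'a::order"
  assumes "\<exists>m. is_glb x y m"
  shows "is_glb x y (glb x y)"
  using assms glb_eqI by auto

lemma lower_bounds_directed:
  fixes x y :: "'a::semilattice_sup"
  assumes "finite S" "S \<noteq> {}" "S \<subseteq> {z. z \<le> x \<and> z \<le> y}"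
  shows "\<exists>m. m \<le> x \<and> m \<le> y \<and> (\<forall>s\<in>S. s \<le> m)"
  using assms
proof (induction S rule: finite_ne_induct)
  case (singleton a)
  then show ?case by auto
next
  case (insert a F)
  then obtain m where "m \<le> x" "m \<le> y" "\<forall>s\<in>F. s \<le> m" by auto
  with insert.prems show ?case
    by (intro exI[of _ "sup a m"]) (auto intro: le_supI2)
qed

lemma finite_glb_exists:
  fixes x y :: "'a::{finite, semilattice_sup, order_bot}"
  shows "\<exists>m. is_glb x y m"
proof -
  let ?lower = "{z. z \<le> x \<and> z \<le> y}"
  have "bot \<in> ?lower" by simp
  then obtain m where "m \<le> x" "m \<le> y" "\<forall>s\<in>?lower. s \<le> m"
    using lower_bounds_directed[of ?lower x y] finite by blast
  then show ?thesis unfolding is_glb_def by auto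
qed

lemma fminus_is_glb:
  fixes v :: "'a::order \<Rightarrow> real"
  assumes "isotone v" and "is_glb x y m"
  shows "fminus v x y = ereal (v m)"
  unfolding fminus_def
proof (rule antisym)
  show "(SUP z \<in> down_set x \<inter> down_set y. ereal (v z)) \<le> ereal (v m)"
    using assms unfolding is_glb_def isotone_def down_set_def
    by (auto intro!: SUP_least)
  show "ereal (v m) \<le> (SUP z \<in> down_set x \<inter> down_set y. ereal (v z))"
    using assms(2) unfolding is_glb_def down_set_def by (intro SUP_upper) auto
qed

lemma fplus_sup:
  fixes v :: "'a::semilattice_sup \<Rightarrow> real"
  assumes "isotone v"
  shows "fplus v x y = ereal (v (sup x y))"
  unfolding fplus_def
proof (rule antisym)
  show "(INF z \<in> up_set x \<inter> up_set y. ereal (v z)) \<le> ereal (v (sup x y))"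
    unfolding up_set_def by (intro INF_lower) auto
  show "ereal (v (sup x y)) \<le> (INF z \<in> up_set x \<inter> up_set y. ereal (v z))"
    using assms unfolding isotone_def up_set_def by (auto intro!: INF_greatest)
qed

lemma metric_condition_valuation_identity:
  fixes v :: "'a::semilattice_sup \<Rightarrow> real"
  assumes "isotone v" and "is_glb x y m"
    and "d_lower v x y = fplus v x y - fminus v x y
       \<or> d_upper v x y = fplus v x y - fminus v x y"
  shows "v x + v y = v (sup x y) + v m"
  using assms(3)
  unfolding d_lower_def d_upper_def fminus_is_glb[OF assms(1,2)] fplus_sup[OF assms(1)]
  by auto

lemma modular_inequality:
  fixes x y z :: "'a::semilattice_sup"
  assumes meets: "\<And>x y :: 'a. \<exists>m. is_glb x y m" and "x \<le> z"
  shows "sup x (glb y z) \<le> glb (sup x y) z"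
proof -
  have yz: "is_glb y z (glb y z)" and xyz: "is_glb (sup x y) z (glb (sup x y) z)"
    using meets is_glb_glb by blast+
  have "glb y z \<le> sup x y" "glb y z \<le> z"
    using yz unfolding is_glb_def by (auto intro: le_supI2)
  with \<open>x \<le> z\<close> xyz show ?thesis unfolding is_glb_def by simp
qed

lemma modular_by_valuation:
  fixes v :: "'a::semilattice_sup \<Rightarrow> real"
  assumes meets: "\<And>x y :: 'a. \<exists>m. is_glb x y m"
    and strict: "strictly_isotone v"
    and val: "\<And>x y. v x + v y = v (sup x y) + v (glb x y)"
  shows "modular_lattice TYPE('a)"
proof -
  have "sup x (glb y z) = glb (sup x y) z" if "x \<le> z" for x y z :: 'a
  proof -
    define a where "a = sup x (glb y z)"
    define b where "b = glb (sup x y) z"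
    have "a \<le> b" unfolding a_def b_def using modular_inequality[OF meets \<open>x \<le> z\<close>] .
    have "is_glb y z (glb y z)" "is_glb x y (glb x y)"
      using meets is_glb_glb by blast+
    with \<open>x \<le> z\<close> have "is_glb x (glb y z) (glb x y)"
      unfolding is_glb_def by (auto intro: order_trans)
    then have meet_x: "glb x (glb y z) = glb x y" by (rule glb_eqI)
    have join_z: "sup (sup x y) z = sup y z"
      using \<open>x \<le> z\<close> by (metis sup.absorb2 sup.assoc sup.commute)
    have "v a = v b"
      using val[of x "glb y z"] val[of "sup x y" z] val[of x y] val[of y z] meet_x join_z
      unfolding a_def b_def by (simp only:)
    with \<open>a \<le> b\<close> strict have "a = b"
      unfolding strictly_isotone_def by (metis less_le less_irrefl)
    then show ?thesis unfolding a_def b_def .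
  qed
  then show ?thesis unfolding modular_lattice_def using meets by blast
qed

theorem mainTheorem3:
  fixes v :: "'a::{finite, semilattice_sup, order_bot} \<Rightarrow> real"
  assumes "strictly_isotone v"
    and "(lower_valuation v \<and> (\<forall>x y. d_lower v x y = fplus v x y - fminus v x y))
       \<or> (upper_valuation v \<and> (\<forall>x y. d_upper v x y = fplus v x y - fminus v x y))"
  shows "modular_lattice TYPE('a)"
proof (rule modular_by_valuation)
  show "\<exists>m. is_glb x y m" for x y :: 'a by (rule finite_glb_exists)
  show "strictly_isotone v" by fact
  have iso: "isotone v"
    using assms(2) unfolding lower_valuation_def upper_valuation_def by auto
  show "v x + v y = v (sup x y) + v (glb x y)" for x y
  proof (rule metric_condition_valuation_identity[OF iso])
    show "is_glb x y (glb x y)" using finite_glb_exists is_glb_glb by blast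
    show "d_lower v x y = fplus v x y - fminus v x y
        \<or> d_upper v x y = fplus v x y - fminus v x y"
      using assms(2) by auto
  qed
qed

end
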